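(* For $n\in\mathbb{Z}$ let $f^{(n)}(x)=x^{2^n}$ on $[0,1]$ and $u^{(n)}=2^{-2^n}$, so that $]0,1[=\bigcup_{n\in\mathbb{Z}}\,]u^{(n+1)},u^{(n)}]$ (disjoint union). Define $U_1:[0,1]^2\to[0,1]$ by $U_1(x,y)=1$ if $\max(x,y)=1$; $U_1(x,y)=0$ if $\min(x,y)=0$ and $\max(x,y)<1$; and $$U_1(x,y)=f^{(n+m)}\big(\min(f^{(-n)}(x),f^{(-m)}(y))\big)\quad\text{if }x\in\,]u^{(n+1)},u^{(n)}],\ y\in\,]u^{(m+1)},u^{(m)}],\ n,m\in\mathbb{Z}.$$ Then: (a) $U_1$ is a disjunctive uninorm with neutral element $1/2$; (b) for each $n\in\mathbb{Z}$, $U_1(u^{(n)},y)=f^{(n)}(y)$ for all $y\in[0,1]$, so each such cut is continuous, strictly increasing with range $[0,1]$; (c) $U_1$ does not have continuous underlying functions; (d) with $N_1(0)=1$, $N_1(1)=0$, $N_1(x)=2^{-2^{-\log_2(-\log_2 x)}}$ for $x\in\,]0,1[$, and $N_2(x)=(N_1(x))^2$, both $N_1,N_2$ are continuous strictly decreasing fuzzy negations; the function $U_2(x,y)=U_1(2^{-1/2},U_1(x,y))$ is a disjunctive uninorm with neutral element $1/4$; and $U_2(N_2(x),y)=U_1(N_1(x),y)$ for all $x,y\in[0,1]$.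
   Context: A fuzzy negation is a non-increasing map $N:[0,1]\to[0,1]$ with $N(0)=1$, $N(1)=0$. A uninorm is a map $U:[0,1]^2\to[0,1]$ that is commutative, associative, non-decreasing in each variable, and has a neutral element $e\in[0,1]$; it is disjunctive if $U(1,0)=1$. For a uninorm with neutral element $e\in\,]0,1[$, the underlying t-norm is $T_U(x,y)=U(ex,ey)/e$ and the underlying t-conorm is $S_U(x,y)=(U(e+(1-e)x,e+(1-e)y)-e)/(1-e)$; $U$ has continuous underlying functions if both are continuous. *)

theory Defs
  imports "HOL-Analysis.Analysis"
begin

definition uninorm :: "(real \<Rightarrow> real \<Rightarrow> real) \<Rightarrow> real \<Rightarrow> bool" where
  "uninorm U e \<longleftrightarrow>
     (\<forall>x\<in>{0..1}. \<forall>y\<in>{0..1}. U x y \<in> {0..1}) \<and>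
     (\<forall>x\<in>{0..1}. \<forall>y\<in>{0..1}. U x y = U y x) \<and>
     (\<forall>x\<in>{0..1}. \<forall>y\<in>{0..1}. \<forall>z\<in>{0..1}. U x (U y z) = U (U x y) z) \<and>
     (\<forall>x\<in>{0..1}. \<forall>x'\<in>{0..1}. \<forall>y\<in>{0..1}. \<forall>y'\<in>{0..1}.
         x \<le> x' \<longrightarrow> y \<le> y' \<longrightarrow> U x y \<le> U x' y') \<and>
     e \<in> {0..1} \<and> (\<forall>x\<in>{0..1}. U e x = x)"

definition disjunctive :: "(real \<Rightarrow> real \<Rightarrow> real) \<Rightarrow> bool" where
  "disjunctive U \<longleftrightarrow> U 1 0 = 1"

definition underlying_tnorm :: "(real \<Rightarrow> real \<Rightarrow> real) \<Rightarrow> real \<Rightarrow> real \<Rightarrow> real \<Rightarrow> real" where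
  "underlying_tnorm U e x y = U (e * x) (e * y) / e"

definition underlying_tconorm :: "(real \<Rightarrow> real \<Rightarrow> real) \<Rightarrow> real \<Rightarrow> real \<Rightarrow> real \<Rightarrow> real" where
  "underlying_tconorm U e x y = (U (e + (1 - e) * x) (e + (1 - e) * y) - e) / (1 - e)"

definition continuous_underlying :: "(real \<Rightarrow> real \<Rightarrow> real) \<Rightarrow> real \<Rightarrow> bool" where
  "continuous_underlying U e \<longleftrightarrow>
     continuous_on ({0..1} \<times> {0..1}) (\<lambda>(x, y). underlying_tnorm U e x y) \<and>
     continuous_on ({0..1} \<times> {0..1}) (\<lambda>(x, y). underlying_tconorm U e x y)"

definition fuzzy_negation :: "(real \<Rightarrow> real) \<Rightarrow> bool" where
  "fuzzy_negation N \<longleftrightarrow> (\<forall>x\<in>{0..1}. N x \<in> {0..1}) \<and>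
     (\<forall>x\<in>{0..1}. \<forall>y\<in>{0..1}. x \<le> y \<longrightarrow> N y \<le> N x) \<and> N 0 = 1 \<and> N 1 = 0"

definition fpow :: "int \<Rightarrow> real \<Rightarrow> real" where
  "fpow n x = x powr (2 powr real_of_int n)"

definition uu :: "int \<Rightarrow> real" where
  "uu n = 2 powr (- (2 powr real_of_int n))"

definition idx :: "real \<Rightarrow> int" where
  "idx x = (THE n. uu (n + 1) < x \<and> x \<le> uu n)"

definition U1 :: "real \<Rightarrow> real \<Rightarrow> real" where
  "U1 x y = (if max x y = 1 then 1
             else if min x y = 0 then 0
             else fpow (idx x + idx y) (min (fpow (- idx x) x) (fpow (- idx y) y)))"

definition N1 :: "real \<Rightarrow> real" where
  "N1 x = (if x = 0 then 1 else if x = 1 then 0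
           else 2 powr (- (2 powr (- log 2 (- log 2 x)))))"

definition N2 :: "real \<Rightarrow> real" where
  "N2 x = (N1 x)^2"

definition U2 :: "real \<Rightarrow> real \<Rightarrow> real" where
  "U2 x y = U1 (2 powr (-1/2)) (U1 x y)"

end

theory Submission
  imports Defs "HOL-Real_Asymp.Real_Asymp"
begin

text \<open>
  The map \<open>psi t = 2 powr -(2 powr t)\<close> extends \<open>n \<mapsto> u^(n)\<close> to real indices; it is a
  decreasing bijection from the reals onto \<open>]0,1[\<close> and conjugates \<open>f^(k)\<close> to the translation
  \<open>t \<mapsto> t + k\<close>. Under \<open>psi\<close> the restriction of \<open>U\<^sub>1\<close> to \<open>]0,1[ \<times> ]0,1[\<close> becomes
  \<open>(s, t) \<mapsto> \<lfloor>s\<rfloor> + \<lfloor>t\<rfloor> + max (frac s) (frac t)\<close>: integer parts add, fractional parts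
  combine by max. This operation is commutative, associative and monotone with neutral element 0,
  and \<open>U\<^sub>1\<close> adjoins 1 and 0 as absorbing elements, so it is a disjunctive uninorm with neutral
  element \<open>psi 0 = 1/2\<close>. For integer \<open>n\<close> the operation is \<open>t \<mapsto> n + t\<close>, so the cut at
  \<open>u^(n)\<close> is \<open>f^(n)\<close>. On \<open>[0,1[\<close> the operation is max, so \<open>U\<^sub>1\<close> is min on \<open>]1/4, 1/2]\<close>,
  whereas \<open>U\<^sub>1 (1/4) y = y\<^sup>2\<close>; hence the underlying t-norm jumps at \<open>x = 1/2\<close>.
  The negation \<open>N\<^sub>1\<close> is conjugate to \<open>t \<mapsto> -t\<close>. Finally, \<open>U\<^sub>2\<close> translates \<open>U\<^sub>1\<close> by
  \<open>c = u^(-1)\<close>, the \<open>U\<^sub>1\<close>-inverse of \<open>1/4\<close>, which gives a uninorm with neutral element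
  \<open>1/4\<close>, and \<open>U\<^sub>1 c (N\<^sub>2 x) = f^(-1) (N\<^sub>1 x\<^sup>2) = N\<^sub>1 x\<close>.
\<close>

definition adjoin_bounds :: "(real \<Rightarrow> real \<Rightarrow> real) \<Rightarrow> real \<Rightarrow> real \<Rightarrow> real" where
  "adjoin_bounds V x y = (if max x y = 1 then 1 else if min x y = 0 then 0 else V x y)"

lemma adjoin_bounds_1 [simp]:
  "x \<le> 1 \<Longrightarrow> adjoin_bounds V 1 x = 1" "x \<le> 1 \<Longrightarrow> adjoin_bounds V x 1 = 1"
  by (simp_all add: adjoin_bounds_def)

lemma adjoin_bounds_0 [simp]:
  "x \<in> {0..<1} \<Longrightarrow> adjoin_bounds V 0 x = 0" "x \<in> {0..<1} \<Longrightarrow> adjoin_bounds V x 0 = 0"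
  by (simp_all add: adjoin_bounds_def)

lemma adjoin_bounds_inner [simp]:
  "x \<in> {0<..<1} \<Longrightarrow> y \<in> {0<..<1} \<Longrightarrow> adjoin_bounds V x y = V x y"
  by (simp add: adjoin_bounds_def max_def min_def)

context
  fixes V :: "real \<Rightarrow> real \<Rightarrow> real"
  assumes V_range: "\<And>x y. x \<in> {0<..<1} \<Longrightarrow> y \<in> {0<..<1} \<Longrightarrow> V x y \<in> {0<..<1}"
begin

lemma adjoin_bounds_range: "x \<in> {0..1} \<Longrightarrow> y \<in> {0..1} \<Longrightarrow> adjoin_bounds V x y \<in> {0..1}"
  using V_range[of x y] by (fastforce simp: adjoin_bounds_def less_imp_le)

lemma adjoin_bounds_lt_1: "x \<in> {0..<1} \<Longrightarrow> y \<in> {0..<1} \<Longrightarrow> adjoin_bounds V x y < 1"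
  using V_range[of x y] by (cases "x = 0 \<or> y = 0") auto

lemma adjoin_bounds_commute:
  assumes V_commute: "\<And>x y. x \<in> {0<..<1} \<Longrightarrow> y \<in> {0<..<1} \<Longrightarrow> V x y = V y x"
    and "x \<in> {0..1}" "y \<in> {0..1}"
  shows "adjoin_bounds V x y = adjoin_bounds V y x"
  using assms by (cases "x \<in> {0<..<1} \<and> y \<in> {0<..<1}") (auto simp: adjoin_bounds_def max_def min_def)

lemma adjoin_bounds_assoc:
  assumes V_assoc: "\<And>x y z. x \<in> {0<..<1} \<Longrightarrow> y \<in> {0<..<1} \<Longrightarrow> z \<in> {0<..<1} \<Longrightarrow>
      V x (V y z) = V (V x y) z"
    and xyz: "x \<in> {0..1}" "y \<in> {0..1}" "z \<in> {0..1}"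
  shows "adjoin_bounds V x (adjoin_bounds V y z) = adjoin_bounds V (adjoin_bounds V x y) z"
proof (cases "x = 1 \<or> y = 1 \<or> z = 1")
  case True
  then show ?thesis
    using xyz adjoin_bounds_range by auto
next
  case not_1: False
  then have "adjoin_bounds V y z \<in> {0..<1}" "adjoin_bounds V x y \<in> {0..<1}"
    using xyz adjoin_bounds_range adjoin_bounds_lt_1 by auto
  moreover have "V y z \<in> {0<..<1}" "V x y \<in> {0<..<1}"
    if "x \<in> {0<..<1}" "y \<in> {0<..<1}" "z \<in> {0<..<1}"
    using that V_range by auto
  ultimately show ?thesis
    using xyz not_1 V_assoc by (cases "x = 0 \<or> y = 0 \<or> z = 0") auto
qed

lemma adjoin_bounds_mono:
  assumes V_mono: "\<And>x y x' y'. x \<in> {0<..<1} \<Longrightarrow> y \<in> {0<..<1} \<Longrightarrow> x' \<in> {0<..<1} \<Longrightarrow>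
      y' \<in> {0<..<1} \<Longrightarrow> x \<le> x' \<Longrightarrow> y \<le> y' \<Longrightarrow> V x y \<le> V x' y'"
    and "x \<in> {0..1}" "y \<in> {0..1}" "x' \<in> {0..1}" "y' \<in> {0..1}" "x \<le> x'" "y \<le> y'"
  shows "adjoin_bounds V x y \<le> adjoin_bounds V x' y'"
proof (cases "x' = 1 \<or> y' = 1")
  case True
  then show ?thesis
    using assms adjoin_bounds_range by auto
next
  case False
  then show ?thesis
    using assms adjoin_bounds_range[of x' y'] by (cases "x = 0 \<or> y = 0") auto
qed

end

lemma uninorm_adjoin_bounds:
  assumes V_range: "\<And>x y. x \<in> {0<..<1} \<Longrightarrow> y \<in> {0<..<1} \<Longrightarrow> V x y \<in> {0<..<1}"
    and V_commute: "\<And>x y. x \<in> {0<..<1} \<Longrightarrow> y \<in> {0<..<1} \<Longrightarrow> V x y = V y x"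
    and V_assoc: "\<And>x y z. x \<in> {0<..<1} \<Longrightarrow> y \<in> {0<..<1} \<Longrightarrow> z \<in> {0<..<1} \<Longrightarrow>
      V x (V y z) = V (V x y) z"
    and V_mono: "\<And>x y x' y'. x \<in> {0<..<1} \<Longrightarrow> y \<in> {0<..<1} \<Longrightarrow> x' \<in> {0<..<1} \<Longrightarrow>
      y' \<in> {0<..<1} \<Longrightarrow> x \<le> x' \<Longrightarrow> y \<le> y' \<Longrightarrow> V x y \<le> V x' y'"
    and e: "e \<in> {0<..<1}" "\<And>x. x \<in> {0<..<1} \<Longrightarrow> V e x = x"
  shows "uninorm (adjoin_bounds V) e"
  unfolding uninorm_def
proof (intro conjI ballI impI)
  fix x y z x' y' :: real
  assume x: "x \<in> {0..1}" and y: "y \<in> {0..1}" and z: "z \<in> {0..1}"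
    and x': "x' \<in> {0..1}" and y': "y' \<in> {0..1}"
  show "adjoin_bounds V x y \<in> {0..1}"
    by (rule adjoin_bounds_range[OF V_range x y])
  show "adjoin_bounds V x y = adjoin_bounds V y x"
    by (rule adjoin_bounds_commute[OF V_range V_commute x y])
  show "adjoin_bounds V x (adjoin_bounds V y z) = adjoin_bounds V (adjoin_bounds V x y) z"
    by (rule adjoin_bounds_assoc[OF V_range V_assoc x y z])
  show "adjoin_bounds V x y \<le> adjoin_bounds V x' y'" if "x \<le> x'" "y \<le> y'"
    by (rule adjoin_bounds_mono[OF V_range V_mono x y x' y' that])
  show "adjoin_bounds V e x = x"
    using x e by (cases "x = 0 \<or> x = 1") auto
qed (use e(1) in simp)

lemma
  assumes "uninorm U e"
  shows uninorm_range: "x \<in> {0..1} \<Longrightarrow> y \<in> {0..1} \<Longrightarrow> U x y \<in> {0..1}"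
    and uninorm_commute: "x \<in> {0..1} \<Longrightarrow> y \<in> {0..1} \<Longrightarrow> U x y = U y x"
    and uninorm_assoc: "x \<in> {0..1} \<Longrightarrow> y \<in> {0..1} \<Longrightarrow> z \<in> {0..1} \<Longrightarrow>
      U x (U y z) = U (U x y) z"
    and uninorm_mono: "x \<in> {0..1} \<Longrightarrow> y \<in> {0..1} \<Longrightarrow> x' \<in> {0..1} \<Longrightarrow> y' \<in> {0..1} \<Longrightarrow>
      x \<le> x' \<Longrightarrow> y \<le> y' \<Longrightarrow> U x y \<le> U x' y'"
    and uninorm_neutral_in_unit: "e \<in> {0..1}"
    and uninorm_neutral: "x \<in> {0..1} \<Longrightarrow> U e x = x"
  using assms unfolding uninorm_def by blast+

lemma uninorm_cong:
  assumes U: "uninorm U e" and agree: "\<And>x y. x \<in> {0..1} \<Longrightarrow> y \<in> {0..1} \<Longrightarrow> U' x y = U x y"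
  shows "uninorm U' e"
  unfolding uninorm_def
proof (intro conjI ballI impI)
  fix x y z x' y' :: real
  assume x: "x \<in> {0..1}" and y: "y \<in> {0..1}" and z: "z \<in> {0..1}"
    and x': "x' \<in> {0..1}" and y': "y' \<in> {0..1}"
  have xy: "U x y \<in> {0..1}" and yz: "U y z \<in> {0..1}"
    using uninorm_range[OF U] x y z by simp_all
  show "U' x y \<in> {0..1}"
    using xy agree[OF x y] by simp
  show "U' x y = U' y x"
    using agree[OF x y] agree[OF y x] uninorm_commute[OF U x y] by simp
  show "U' x (U' y z) = U' (U' x y) z"
    using agree[OF y z] agree[OF x y] agree[OF x yz] agree[OF xy z] uninorm_assoc[OF U x y z] by simp
  show "U' x y \<le> U' x' y'" if "x \<le> x'" "y \<le> y'"
    using agree[OF x y] agree[OF x' y'] uninorm_mono[OF U x y x' y' that] by simp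
  show "U' e x = x"
    using agree[OF uninorm_neutral_in_unit[OF U] x] uninorm_neutral[OF U x] by simp
qed (rule uninorm_neutral_in_unit[OF U])

lemma uninorm_left_commute:
  assumes U: "uninorm U e" and "x \<in> {0..1}" "y \<in> {0..1}" "z \<in> {0..1}"
  shows "U x (U y z) = U y (U x z)"
  using assms uninorm_assoc[OF U] uninorm_commute[OF U] by metis

lemma uninorm_left_translate:
  assumes U: "uninorm U e" and c: "c \<in> {0..1}" and e': "e' \<in> {0..1}" "U c e' = e"
  shows "uninorm (\<lambda>x y. U c (U x y)) e'"
proof -
  note range = uninorm_range[OF U] and commute = uninorm_commute[OF U]
    and assoc = uninorm_assoc[OF U] and left_commute = uninorm_left_commute[OF U]
  have translated_assoc: "U c (U x (U c (U y z))) = U c (U (U c (U x y)) z)"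
    if x: "x \<in> {0..1}" and y: "y \<in> {0..1}" and z: "z \<in> {0..1}" for x y z
  proof -
    have xy: "U x y \<in> {0..1}" and yz: "U y z \<in> {0..1}" and cxy: "U c (U x y) \<in> {0..1}"
      using x y z c range by simp_all
    have "U c (U x (U c (U y z))) = U c (U c (U x (U y z)))"
      by (simp only: left_commute[OF x c yz])
    also have "\<dots> = U c (U c (U z (U x y)))"
      by (simp only: assoc[OF x y z] commute[OF xy z])
    also have "\<dots> = U c (U (U c (U x y)) z)"
      by (simp only: commute[OF cxy z] left_commute[OF z c xy])
    finally show ?thesis .
  qed
  have translated_neutral: "U c (U e' x) = x" if "x \<in> {0..1}" for x
    using that c e' assoc uninorm_neutral[OF U] by metis
  show ?thesis
    unfolding uninorm_def
  proof (intro conjI ballI impI)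
    fix x y z x' y' :: real
    assume x: "x \<in> {0..1}" and y: "y \<in> {0..1}" and z: "z \<in> {0..1}"
      and x': "x' \<in> {0..1}" and y': "y' \<in> {0..1}"
    show "U c (U x y) \<in> {0..1}"
      using x y c range by simp
    show "U c (U x y) = U c (U y x)"
      by (simp only: commute[OF x y])
    show "U c (U x (U c (U y z))) = U c (U (U c (U x y)) z)"
      by (rule translated_assoc[OF x y z])
    show "U c (U x y) \<le> U c (U x' y')" if "x \<le> x'" "y \<le> y'"
      using uninorm_mono[OF U x y x' y' that] uninorm_mono[OF U c range[OF x y] c range[OF x' y']]
      by simp
    show "U c (U e' x) = x"
      by (rule translated_neutral[OF x])
  qed (rule e'(1))
qed

lemma disjunctive_left_translate:
  assumes U: "uninorm U e" "disjunctive U" and c: "c \<in> {0..1}"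
  shows "disjunctive (\<lambda>x y. U c (U x y))"
proof -
  have "U 0 1 = 1"
    using U unfolding uninorm_def disjunctive_def by auto
  moreover have "U 0 1 \<le> U c 1" "U c 1 \<le> 1"
    using U(1) c unfolding uninorm_def by auto
  ultimately show ?thesis
    using U(2) by (simp add: disjunctive_def)
qed

lemma fuzzy_negation_of_strict_antimono:
  assumes "\<forall>x\<in>{0..1}. \<forall>y\<in>{0..1}. x < y \<longrightarrow> N y < N x" "N 0 = 1" "N 1 = 0"
  shows "fuzzy_negation N"
proof -
  have antimono: "N y \<le> N x" if "x \<in> {0..1}" "y \<in> {0..1}" "x \<le> y" for x y
    using assms(1) that by (force simp: le_less)
  have "N x \<in> {0..1}" if "x \<in> {0..1}" for x
    using antimono[of x 1] antimono[of 0 x] that assms(2,3) by simp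
  with antimono show ?thesis
    unfolding fuzzy_negation_def using assms(2,3) by blast
qed

lemma powr_image_unit_interval:
  fixes c :: real
  assumes "c > 0"
  shows "(\<lambda>x. x powr c) ` {0..1} = {0..1}"
proof
  show "(\<lambda>x. x powr c) ` {0..1} \<subseteq> {0..1}"
    using assms by (auto intro!: powr_le1)
  show "{0..1} \<subseteq> (\<lambda>x. x powr c) ` {0..1}"
  proof
    fix z :: real
    assume "z \<in> {0..1}"
    then have "z = (z powr (1/c)) powr c" "z powr (1/c) \<in> {0..1}"
      using assms by (auto simp: powr_powr intro!: powr_le1)
    then show "z \<in> (\<lambda>x. x powr c) ` {0..1}"
      by blast
  qed
qed

definition psi :: "real \<Rightarrow> real" where
  "psi t = 2 powr - (2 powr t)"

definition phi :: "real \<Rightarrow> real" where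
  "phi x = log 2 (- log 2 x)"

lemma psi_gt_0: "0 < psi t"
  by (simp add: psi_def)

lemma psi_less_iff [simp]: "psi s < psi t \<longleftrightarrow> t < s"
  by (simp add: psi_def)

lemma psi_le_iff [simp]: "psi s \<le> psi t \<longleftrightarrow> t \<le> s"
  by (simp add: psi_def)

lemma psi_lt_1: "psi t < 1"
proof -
  have "2 powr - (2 powr t) < 2 powr (0::real)"
    by (rule powr_less_mono) auto
  then show ?thesis
    by (simp add: psi_def)
qed

lemma psi_0: "psi 0 = 1/2" and psi_1: "psi 1 = 1/4"
  by (simp_all add: psi_def powr_minus)

lemma phi_psi [simp]: "phi (psi t) = t"
  by (simp add: psi_def phi_def)

lemma psi_phi: "x \<in> {0<..<1} \<Longrightarrow> psi (phi x) = x"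
  by (simp add: psi_def phi_def)

lemma psi_cases:
  assumes "x \<in> {0..1}"
  obtains "x = 0" | "x = 1" | t where "x = psi t"
proof -
  consider "x = 0" | "x = 1" | "x \<in> {0<..<1}"
    using assms by fastforce
  then show ?thesis
    using that psi_phi by metis
qed

lemma min_psi: "min (psi s) (psi t) = psi (max s t)"
  by (simp add: min_def max_def)

lemma uu_eq_psi: "uu n = psi n"
  by (simp add: uu_def psi_def)

lemma fpow_psi: "fpow k (psi t) = psi (t + k)"
  by (simp add: fpow_def psi_def powr_powr powr_add)

lemma idx_psi: "idx (psi t) = \<lfloor>t\<rfloor>"
proof -
  have "uu (n + 1) < psi t \<and> psi t \<le> uu n \<longleftrightarrow> n = \<lfloor>t\<rfloor>" for n
    by (simp add: uu_eq_psi floor_eq_iff) linarith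
  then show ?thesis
    unfolding idx_def by simp
qed

definition floor_sum_frac_max :: "real \<Rightarrow> real \<Rightarrow> real" where
  "floor_sum_frac_max s t = \<lfloor>s\<rfloor> + \<lfloor>t\<rfloor> + max (frac s) (frac t)"

lemma floor_sum_frac_max_eq_max:
  "floor_sum_frac_max s t = max (s + of_int \<lfloor>t\<rfloor>) (of_int \<lfloor>s\<rfloor> + t)"
  by (simp add: floor_sum_frac_max_def frac_def max_def)

lemma floor_floor_sum_frac_max: "\<lfloor>floor_sum_frac_max s t\<rfloor> = \<lfloor>s\<rfloor> + \<lfloor>t\<rfloor>"
  unfolding floor_sum_frac_max_def by (rule floor_unique) (auto simp: frac_lt_1 max_def)

lemma frac_floor_sum_frac_max: "frac (floor_sum_frac_max s t) = max (frac s) (frac t)"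
  using floor_floor_sum_frac_max[of s t] by (simp add: frac_def floor_sum_frac_max_def)

lemma floor_sum_frac_max_commute: "floor_sum_frac_max s t = floor_sum_frac_max t s"
  by (simp add: floor_sum_frac_max_def max.commute add.commute)

lemma floor_sum_frac_max_assoc:
  "floor_sum_frac_max r (floor_sum_frac_max s t) = floor_sum_frac_max (floor_sum_frac_max r s) t"
  by (simp add: floor_sum_frac_max_def[of r "floor_sum_frac_max s t"]
      floor_sum_frac_max_def[of "floor_sum_frac_max r s" t]
      floor_floor_sum_frac_max frac_floor_sum_frac_max max.assoc)

lemma floor_sum_frac_max_mono: "s \<le> s' \<Longrightarrow> t \<le> t' \<Longrightarrow> floor_sum_frac_max s t \<le> floor_sum_frac_max s' t'"
  using floor_mono[of s s'] floor_mono[of t t']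
  by (auto simp: floor_sum_frac_max_eq_max max_def)

lemma floor_sum_frac_max_of_int: "floor_sum_frac_max (of_int n) t = of_int n + t"
  by (simp add: floor_sum_frac_max_eq_max max_absorb2)

lemma floor_sum_frac_max_unit: "s \<in> {0..<1} \<Longrightarrow> t \<in> {0..<1} \<Longrightarrow> floor_sum_frac_max s t = max s t"
proof -
  assume "s \<in> {0..<1}" "t \<in> {0..<1}"
  then have "\<lfloor>s\<rfloor> = 0" "\<lfloor>t\<rfloor> = 0"
    by (simp_all add: floor_eq_iff)
  then show ?thesis
    by (simp add: floor_sum_frac_max_eq_max)
qed

lemma phi_antimono: "x \<in> {0<..<1} \<Longrightarrow> y \<in> {0<..<1} \<Longrightarrow> x \<le> y \<Longrightarrow> phi y \<le> phi x"
  by (metis psi_le_iff psi_phi)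

lemma U1_psi: "U1 (psi s) (psi t) = psi (floor_sum_frac_max s t)"
proof -
  have "max (psi s) (psi t) \<noteq> 1" "min (psi s) (psi t) \<noteq> 0"
    using psi_lt_1[of s] psi_lt_1[of t] psi_gt_0[of s] psi_gt_0[of t] by (auto simp: max_def min_def)
  then show ?thesis
    unfolding U1_def
    by (simp add: idx_psi fpow_psi min_psi floor_sum_frac_max_def frac_def algebra_simps)
qed

lemma U1_eq_adjoin_bounds:
  assumes "x \<in> {0..1}" "y \<in> {0..1}"
  shows "U1 x y = adjoin_bounds (\<lambda>x y. psi (floor_sum_frac_max (phi x) (phi y))) x y"
proof (cases "x \<in> {0<..<1} \<and> y \<in> {0<..<1}")
  case True
  then show ?thesis
    using U1_psi[of "phi x" "phi y"] by (simp add: psi_phi)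
next
  case False
  then show ?thesis
    using assms by (auto simp: U1_def adjoin_bounds_def max_def min_def)
qed

lemma uninorm_U1: "uninorm U1 (1/2)"
proof (rule uninorm_cong[OF _ U1_eq_adjoin_bounds], rule uninorm_adjoin_bounds)
  let ?V = "\<lambda>x y. psi (floor_sum_frac_max (phi x) (phi y))"
  show "?V x y \<in> {0<..<1}" for x y
    using psi_gt_0 psi_lt_1 by simp
  show "?V x y = ?V y x" for x y
    by (simp add: floor_sum_frac_max_commute)
  show "?V x (?V y z) = ?V (?V x y) z" for x y z
    by (simp add: floor_sum_frac_max_assoc)
  show "?V x y \<le> ?V x' y'"
    if "x \<in> {0<..<1}" "y \<in> {0<..<1}" "x' \<in> {0<..<1}" "y' \<in> {0<..<1}" "x \<le> x'" "y \<le> y'"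
    for x y x' y'
    using that by (simp add: floor_sum_frac_max_mono phi_antimono)
  show "1/2 \<in> {0<..<1::real}"
    by simp
  show "?V (1/2) x = x" if "x \<in> {0<..<1}" for x
    using floor_sum_frac_max_of_int[of 0 "phi x"] that
    by (simp add: psi_phi flip: psi_0)
qed

lemma disjunctive_U1: "disjunctive U1"
  by (simp add: disjunctive_def U1_def)

lemma U1_uu:
  assumes "y \<in> {0..1}"
  shows "U1 (uu n) y = fpow n y"
  using assms
proof (cases rule: psi_cases)
  case 1
  then show ?thesis
    using psi_lt_1[of n] by (simp add: uu_eq_psi U1_def fpow_def)
next
  case 2
  then show ?thesis
    by (simp add: U1_def fpow_def)
next
  case (3 t)
  then show ?thesis
    by (simp add: uu_eq_psi U1_psi floor_sum_frac_max_of_int fpow_psi add.commute)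
qed

lemma continuous_on_fpow: "continuous_on {0..1} (fpow n)"
  unfolding fpow_def by (intro continuous_on_powr' continuous_intros) auto

lemma strict_mono_on_fpow: "strict_mono_on {0..1} (fpow n)"
  unfolding strict_mono_on_def fpow_def by (auto intro!: powr_less_mono2)
lemma fpow_image: "fpow n ` {0..1} = {0..1}"
  unfolding fpow_def[abs_def] by (rule powr_image_unit_interval) simp

lemma U1_uu_cut:
  "continuous_on {0..1} (U1 (uu n)) \<and> strict_mono_on {0..1} (U1 (uu n)) \<and>
    U1 (uu n) ` {0..1} = {0..1}"
proof -
  have "continuous_on {0..1} (U1 (uu n)) \<longleftrightarrow> continuous_on {0..1} (fpow n)"
    by (rule continuous_on_cong[OF refl U1_uu])
  moreover have "strict_mono_on {0..1} (U1 (uu n)) \<longleftrightarrow> strict_mono_on {0..1} (fpow n)"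
    by (simp add: strict_mono_on_def U1_uu)
  moreover have "U1 (uu n) ` {0..1} = fpow n ` {0..1}"
    by (rule image_cong[OF refl U1_uu])
  ultimately show ?thesis
    using continuous_on_fpow strict_mono_on_fpow fpow_image by simp
qed

lemma U1_eq_min:
  assumes "x \<in> {1/4<..1/2}" "y \<in> {1/4<..1/2}"
  shows "U1 x y = min x y"
proof -
  have phi_unit: "phi z \<in> {0..<1}" and psi_phi_z: "psi (phi z) = z" if "z \<in> {1/4<..1/2}" for z
  proof -
    show "psi (phi z) = z"
      using that by (simp add: psi_phi)
    then have "psi 1 < psi (phi z)" "psi (phi z) \<le> psi 0"
      using that by (simp_all add: psi_0 psi_1)
    then show "phi z \<in> {0..<1}"
      by simp
  qed
  have "U1 (psi (phi x)) (psi (phi y)) = min (psi (phi x)) (psi (phi y))"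
    using floor_sum_frac_max_unit[OF phi_unit phi_unit, OF assms] by (simp add: U1_psi min_psi)
  then show ?thesis
    using assms by (simp add: psi_phi_z)
qed

lemma not_continuous_underlying_U1: "\<not> continuous_underlying U1 (1/2)"
proof
  let ?T = "\<lambda>x. underlying_tnorm U1 (1/2) x (2/3)"
  assume "continuous_underlying U1 (1/2)"
  then have "continuous_on ({0..1} \<times> {0..1}) (\<lambda>(x, y). underlying_tnorm U1 (1/2) x y)"
    by (simp add: continuous_underlying_def)
  then have "continuous_on {1/2..2/3} (\<lambda>x. (\<lambda>(x, y). underlying_tnorm U1 (1/2) x y) (x, 2/3))"
    by (rule continuous_on_compose2) (auto intro!: continuous_intros)
  moreover have closure_eq: "closure {1/2<..2/3} = {1/2..2/3::real}"
    by (rule closure_greaterThanAtMost) simp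
  ultimately have "continuous_on (closure {1/2<..2/3}) (\<lambda>x. ?T x - x)"
    by (auto intro!: continuous_intros)
  moreover have "?T x - x = 0" if "x \<in> {1/2<..2/3}" for x
    using that U1_eq_min[of "x/2" "1/3"] by (simp add: underlying_tnorm_def min_def)
  moreover have "1/2 \<in> closure {1/2<..2/3::real}"
    by (simp add: closure_eq)
  ultimately have "?T (1/2) - 1/2 = 0"
    by (rule continuous_constant_on_closure)
  moreover have "?T (1/2) = 2/9"
    using U1_uu[of "1/3" 1] by (simp add: underlying_tnorm_def uu_def fpow_def powr_minus powr_numeral power2_eq_square)
  ultimately show False
    by simp
qed

lemma N1_eq: "x \<in> {0<..<1} \<Longrightarrow> N1 x = psi (- phi x)"
  by (simp add: N1_def psi_def phi_def)

lemma N1_psi: "N1 (psi t) = psi (- t)"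
  using psi_gt_0[of t] psi_lt_1[of t] by (simp add: N1_eq)

lemma N1_0: "N1 0 = 1" and N1_1: "N1 1 = 0"
  by (simp_all add: N1_def)

lemma N1_strict_antimono: "\<forall>x\<in>{0..1}. \<forall>y\<in>{0..1}. x < y \<longrightarrow> N1 y < N1 x"
proof (intro ballI impI)
  fix x y :: real
  assume x: "x \<in> {0..1}" and y: "y \<in> {0..1}" and "x < y"
  show "N1 y < N1 x"
    by (rule psi_cases[OF x]; rule psi_cases[OF y])
      (use \<open>x < y\<close> in \<open>auto simp: N1_0 N1_1 N1_psi psi_gt_0 psi_lt_1
        less_not_sym[OF psi_gt_0] less_not_sym[OF psi_lt_1]\<close>)
qed

lemma fuzzy_negation_N1: "fuzzy_negation N1"
  by (rule fuzzy_negation_of_strict_antimono[OF N1_strict_antimono N1_0 N1_1])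

lemma continuous_on_N1: "continuous_on {0..1} N1"
proof (rule continuous_on_IccI)
  have "eventually (\<lambda>x. psi (- phi x) = N1 x) (at_right 0)"
    by (rule eventually_at_rightI[of 0 1]) (simp_all add: N1_eq)
  moreover have "((\<lambda>x. psi (- phi x)) \<longlongrightarrow> 1) (at_right 0)"
    unfolding psi_def phi_def by real_asymp
  ultimately show "(N1 \<longlongrightarrow> N1 0) (at_right 0)"
    by (simp add: N1_0 tendsto_cong)
  have "eventually (\<lambda>x. psi (- phi x) = N1 x) (at_left 1)"
    by (rule eventually_at_leftI[of 0]) (simp_all add: N1_eq)
  moreover have "((\<lambda>x. psi (- phi x)) \<longlongrightarrow> 0) (at_left 1)"
    unfolding psi_def phi_def by real_asymp
  ultimately show "(N1 \<longlongrightarrow> N1 1) (at_left 1)"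
    by (simp add: N1_1 tendsto_cong)
  have "log 2 x < 0" if "x \<in> {0<..<1}" for x
    using that by simp
  then have "continuous_on {0<..<1} (\<lambda>x. psi (- phi x))"
    unfolding psi_def phi_def by (intro continuous_intros) fastforce+
  then have "continuous_on {0<..<1} N1"
    by (rule continuous_on_cong[THEN iffD1, rotated 2]) (simp_all add: N1_eq)
  then show "N1 \<midarrow>x\<rightarrow> N1 x" if "0 < x" "x < 1" for x
    using that by (simp add: continuous_on_eq_continuous_at isCont_def)
qed simp

lemma N2_strict_antimono: "\<forall>x\<in>{0..1}. \<forall>y\<in>{0..1}. x < y \<longrightarrow> N2 y < N2 x"
proof (intro ballI impI)
  fix x y :: real
  assume "x \<in> {0..1}" "y \<in> {0..1}" "x < y"
  moreover have "0 \<le> N1 y"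
    using fuzzy_negation_N1 \<open>y \<in> {0..1}\<close> by (simp add: fuzzy_negation_def)
  ultimately show "N2 y < N2 x"
    using N1_strict_antimono by (simp add: N2_def power_strict_mono)
qed

lemma fuzzy_negation_N2: "fuzzy_negation N2"
  by (rule fuzzy_negation_of_strict_antimono[OF N2_strict_antimono])
    (simp_all add: N2_def N1_0 N1_1)

lemma continuous_on_N2: "continuous_on {0..1} N2"
  unfolding N2_def[abs_def] using continuous_on_N1 by (intro continuous_intros)

lemma U2_eq: "U2 = (\<lambda>x y. U1 (uu (-1)) (U1 x y))"
  by (simp add: fun_eq_iff U2_def uu_def powr_minus)

lemma uu_in_unit: "uu n \<in> {0..1}"
  using psi_gt_0 psi_lt_1 by (simp add: uu_eq_psi less_imp_le)

lemma uninorm_U2: "uninorm U2 (1/4)"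
proof -
  have "U1 (uu (-1)) (uu 1) = 1/2"
    using U1_uu[OF uu_in_unit[of 1], of "-1"] by (simp add: uu_eq_psi fpow_psi psi_0)
  then have "uninorm (\<lambda>x y. U1 (uu (-1)) (U1 x y)) (uu 1)"
    by (rule uninorm_left_translate[OF uninorm_U1 uu_in_unit uu_in_unit])
  then show ?thesis
    by (simp add: U2_eq uu_eq_psi psi_1)
qed

lemma disjunctive_U2: "disjunctive U2"
  unfolding U2_eq by (rule disjunctive_left_translate[OF uninorm_U1 disjunctive_U1 uu_in_unit])

lemma fpow_fpow: "fpow a (fpow b x) = fpow (a + b) x"
  by (simp add: fpow_def powr_powr powr_add mult.commute)

lemma U2_N2: "x \<in> {0..1} \<Longrightarrow> y \<in> {0..1} \<Longrightarrow> U2 (N2 x) y = U1 (N1 x) y"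
proof -
  assume x: "x \<in> {0..1}" and y: "y \<in> {0..1}"
  have N1: "N1 x \<in> {0..1}" and N2: "N2 x \<in> {0..1}"
    using fuzzy_negation_N1 fuzzy_negation_N2 x by (simp_all add: fuzzy_negation_def)
  have "N2 x = fpow 1 (N1 x)"
    using N1 by (simp add: N2_def fpow_def powr_numeral)
  then have "U1 (uu (-1)) (N2 x) = N1 x"
    using N1 N2 by (simp add: U1_uu fpow_fpow fpow_def)
  moreover have "U1 (uu (-1)) (U1 (N2 x) y) = U1 (U1 (uu (-1)) (N2 x)) y"
    by (rule uninorm_assoc[OF uninorm_U1 uu_in_unit N2 y])
  ultimately show ?thesis
    by (simp add: U2_eq)
qed

theorem mainTheorem8:
  shows
    "(uninorm U1 (1/2) \<and> disjunctive U1) \<and>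
     (\<forall>n::int.
        (\<forall>y\<in>{0..1}. U1 (uu n) y = fpow n y) \<and>
        continuous_on {0..1} (U1 (uu n)) \<and>
        strict_mono_on {0..1} (U1 (uu n)) \<and>
        U1 (uu n) ` {0..1} = {0..1}) \<and>
     \<not> continuous_underlying U1 (1/2) \<and>
     (fuzzy_negation N1 \<and> continuous_on {0..1} N1 \<and>
        (\<forall>x\<in>{0..1}. \<forall>y\<in>{0..1}. x < y \<longrightarrow> N1 y < N1 x) \<and>
      fuzzy_negation N2 \<and> continuous_on {0..1} N2 \<and>
        (\<forall>x\<in>{0..1}. \<forall>y\<in>{0..1}. x < y \<longrightarrow> N2 y < N2 x) \<and>
      uninorm U2 (1/4) \<and> disjunctive U2 \<and>
      (\<forall>x\<in>{0..1}. \<forall>y\<in>{0..1}. U2 (N2 x) y = U1 (N1 x) y))"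
  using uninorm_U1 disjunctive_U1 U1_uu U1_uu_cut not_continuous_underlying_U1
    fuzzy_negation_N1 continuous_on_N1 N1_strict_antimono
    fuzzy_negation_N2 continuous_on_N2 N2_strict_antimono
    uninorm_U2 disjunctive_U2 U2_N2
  by blast

end
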